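(* Let $G$ be an infinite simple graph. Then either $\theta(G)=1$ (which happens exactly when $G$ is asymmetric), or $\theta(G)=\infty$, i.e. for no finite $k$ is every vertex coloring of $G$ using exactly $k$ colors distinguishing.
   Context: A vertex coloring of $G$ is distinguishing if no non-identity automorphism of $G$ maps every vertex to a vertex of the same color. The distinguishing threshold $\theta(G)$ is the minimum number $k$ such that every vertex coloring of $G$ using exactly $k$ colors is distinguishing, and $\theta(G)=\infty$ if no finite such $k$ exists. Equivalently, $\theta(G)-1$ is the supremum of the number of cycles (fixed points counted as cycles) of non-identity automorphisms of $G$. *)

theory Defs
  imports Main "HOL-Library.Extended_Nat"
begin

definition simple_graph :: "'a set \<Rightarrow> ('a \<Rightarrow> 'a \<Rightarrow> bool) \<Rightarrow> bool" where
  "simple_graph V E \<longleftrightarrow>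
     (\<forall>u v. E u v \<longrightarrow> u \<in> V \<and> v \<in> V) \<and>
     (\<forall>u v. E u v \<longrightarrow> E v u) \<and>
     (\<forall>v. \<not> E v v)"

definition automorphism :: "'a set \<Rightarrow> ('a \<Rightarrow> 'a \<Rightarrow> bool) \<Rightarrow> ('a \<Rightarrow> 'a) \<Rightarrow> bool" where
  "automorphism V E f \<longleftrightarrow>
     bij_betw f V V \<and> (\<forall>u\<in>V. \<forall>v\<in>V. E u v \<longleftrightarrow> E (f u) (f v))"

definition non_identity_on :: "'a set \<Rightarrow> ('a \<Rightarrow> 'a) \<Rightarrow> bool" where
  "non_identity_on V f \<longleftrightarrow> (\<exists>v\<in>V. f v \<noteq> v)"

definition asymmetric :: "'a set \<Rightarrow> ('a \<Rightarrow> 'a \<Rightarrow> bool) \<Rightarrow> bool" where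
  "asymmetric V E \<longleftrightarrow> \<not> (\<exists>f. automorphism V E f \<and> non_identity_on V f)"

definition uses_exactly :: "'a set \<Rightarrow> ('a \<Rightarrow> nat) \<Rightarrow> nat \<Rightarrow> bool" where
  "uses_exactly V c k \<longleftrightarrow> finite (c ` V) \<and> card (c ` V) = k"

definition distinguishing :: "'a set \<Rightarrow> ('a \<Rightarrow> 'a \<Rightarrow> bool) \<Rightarrow> ('a \<Rightarrow> nat) \<Rightarrow> bool" where
  "distinguishing V E c \<longleftrightarrow>
     (\<forall>f. automorphism V E f \<and> non_identity_on V f \<longrightarrow> \<not> (\<forall>v\<in>V. c (f v) = c v))"

text \<open>Distinguishing threshold: least k \<ge> 1 such that every colouring with exactly k colours
  is distinguishing; \<infinity> if no such finite k exists (Inf of the empty set of enat is \<infinity>).\<close>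
definition dist_threshold :: "'a set \<Rightarrow> ('a \<Rightarrow> 'a \<Rightarrow> bool) \<Rightarrow> enat" where
  "dist_threshold V E =
     Inf (enat ` {k. k \<ge> 1 \<and> (\<forall>c. uses_exactly V c k \<longrightarrow> distinguishing V E c)})"

end

theory Submission
  imports Defs
begin

text \<open>A non-identity automorphism f yields, for every k, a non-identity automorphism g
  with at least k orbits on V: g = f if all f-orbits are finite (there are then infinitely
  many, as V is infinite), and g = f^k if some vertex x has an infinite f-orbit (then
  x, f x, ..., f^(k-1) x lie in distinct g-orbits). Giving k of these orbits distinct colours,
  and all remaining vertices one of these colours, yields a g-invariant colouring with exactly
  k colours, so no finite k is a threshold.\<close>

lemma automorphism_comp:
  assumes f: "automorphism V E f" and g: "automorphism V E g"
  shows "automorphism V E (f \<circ> g)"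
proof -
  have "E u v \<longleftrightarrow> E (f (g u)) (f (g v))" if "u \<in> V" "v \<in> V" for u v
  proof -
    have "g u \<in> V" "g v \<in> V" using g that unfolding automorphism_def bij_betw_def by auto
    then show ?thesis using f g that unfolding automorphism_def by blast
  qed
  moreover have "bij_betw (f \<circ> g) V V"
    using f g bij_betw_trans unfolding automorphism_def by blast
  ultimately show ?thesis unfolding automorphism_def by simp
qed

lemma automorphism_funpow: "automorphism V E f \<Longrightarrow> automorphism V E (f ^^ n)"
  by (induction n) (auto simp: automorphism_comp, simp add: automorphism_def)

text \<open>Only forward iterates are used: for a bijection g of V the classes below are the
  orbits of the cyclic group generated by g, without mentioning the inverse of g.\<close>

definition iterate_related :: "('a \<Rightarrow> 'a) \<Rightarrow> 'a \<Rightarrow> 'a \<Rightarrow> bool" where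
  "iterate_related g y z \<longleftrightarrow> (\<exists>n. (g ^^ n) y = z \<or> (g ^^ n) z = y)"

definition iterate_class :: "'a set \<Rightarrow> ('a \<Rightarrow> 'a) \<Rightarrow> 'a \<Rightarrow> 'a set" where
  "iterate_class V g y = {z \<in> V. iterate_related g y z}"

lemma self_in_iterate_class: "y \<in> V \<Longrightarrow> y \<in> iterate_class V g y"
  unfolding iterate_class_def iterate_related_def by (auto intro: exI[of _ 0])

lemma iterate_related_apply:
  assumes inj: "inj_on g V" and maps: "g ` V \<subseteq> V" and "y \<in> V" "z \<in> V"
  shows "iterate_related g (g y) z \<longleftrightarrow> iterate_related g y z"
proof
  assume "iterate_related g (g y) z"
  then obtain n where "(g ^^ n) (g y) = z \<or> (g ^^ n) z = g y"
    unfolding iterate_related_def by auto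
  then show "iterate_related g y z"
  proof
    assume "(g ^^ n) (g y) = z"
    then have "(g ^^ Suc n) y = z" by (simp only: funpow_Suc_right o_apply)
    then show ?thesis unfolding iterate_related_def by blast
  next
    assume backward: "(g ^^ n) z = g y"
    show ?thesis
    proof (cases n)
      case 0
      then have "(g ^^ 1) y = z" using backward by simp
      then show ?thesis unfolding iterate_related_def by blast
    next
      case (Suc m)
      have "(g ^^ m) z \<in> V" using maps \<open>z \<in> V\<close> by (induction m) auto
      then have "(g ^^ m) z = y" using backward Suc inj_onD[OF inj] \<open>y \<in> V\<close> by simp
      then show ?thesis unfolding iterate_related_def by blast
    qed
  qed
next
  assume "iterate_related g y z"
  then obtain n where "(g ^^ n) y = z \<or> (g ^^ n) z = y"
    unfolding iterate_related_def by auto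
  then show "iterate_related g (g y) z"
  proof
    assume forward: "(g ^^ n) y = z"
    show ?thesis
    proof (cases n)
      case 0
      then have "(g ^^ 1) z = g y" using forward by simp
      then show ?thesis unfolding iterate_related_def by blast
    next
      case (Suc m)
      then have "(g ^^ m) (g y) = z" using forward by (simp only: funpow_Suc_right o_apply)
      then show ?thesis unfolding iterate_related_def by blast
    qed
  next
    assume "(g ^^ n) z = y"
    then have "(g ^^ Suc n) z = g y" by simp
    then show ?thesis unfolding iterate_related_def by blast
  qed
qed

lemma iterate_class_apply:
  assumes "inj_on g V" and "g ` V \<subseteq> V" and "y \<in> V"
  shows "iterate_class V g (g y) = iterate_class V g y"
  using iterate_related_apply[OF assms] unfolding iterate_class_def by blast

lemma invariant_colouring:
  fixes q :: "'a \<Rightarrow> 'b"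
  assumes inv: "\<forall>y\<in>V. q (g y) = q y" and T: "T \<subseteq> q ` V" "card T = k" "k \<ge> 1"
  shows "\<exists>c. uses_exactly V c k \<and> (\<forall>y\<in>V. c (g y) = c y)"
proof -
  have "finite T" using T by (intro card_ge_0_finite) simp
  then obtain e where e: "bij_betw e T {0..<k}" using ex_bij_betw_finite_nat T(2) by blast
  define c where "c y = (if q y \<in> T then e (q y) else 0)" for y
  have "c ` V = {0..<k}"
  proof
    show "c ` V \<subseteq> {0..<k}"
      using e T(3) unfolding c_def bij_betw_def by auto
    show "{0..<k} \<subseteq> c ` V"
    proof
      fix i assume "i \<in> {0..<k}"
      then have "i \<in> e ` T" using e unfolding bij_betw_def by simp
      then obtain t where "t \<in> T" "e t = i" by blast
      moreover obtain y where "y \<in> V" "q y = t" using \<open>t \<in> T\<close> T(1) by auto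
      ultimately show "i \<in> c ` V" unfolding c_def by force
    qed
  qed
  moreover have "\<forall>y\<in>V. c (g y) = c y" using inv unfolding c_def by simp
  ultimately show ?thesis unfolding uses_exactly_def by (intro exI[of _ c]) simp
qed

lemma non_distinguishing_colouring:
  assumes g: "automorphism V E g" "non_identity_on V g"
    and T: "T \<subseteq> iterate_class V g ` V" "card T = k" "k \<ge> 1"
  shows "\<exists>c. uses_exactly V c k \<and> \<not> distinguishing V E c"
proof -
  have "inj_on g V" "g ` V \<subseteq> V" using g(1) unfolding automorphism_def bij_betw_def by auto
  then have "\<forall>y\<in>V. iterate_class V g (g y) = iterate_class V g y"
    using iterate_class_apply by metis
  then obtain c where "uses_exactly V c k" "\<forall>y\<in>V. c (g y) = c y"
    using invariant_colouring[OF _ T] by blast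
  then show ?thesis using g unfolding distinguishing_def by blast
qed

lemma iterate_class_subset_periodic_orbit:
  assumes per: "\<forall>x\<in>V. \<exists>p>0. (f ^^ p) x = x" and y: "p > 0" "(f ^^ p) y = y"
  shows "iterate_class V f y \<subseteq> (\<lambda>n. (f ^^ n) y) ` {..<p}"
proof
  fix z assume "z \<in> iterate_class V f y"
  then obtain n where "z \<in> V" "(f ^^ n) y = z \<or> (f ^^ n) z = y"
    unfolding iterate_class_def iterate_related_def by blast
  moreover have "\<exists>m. (f ^^ m) y = z" if "z \<in> V" "(f ^^ n) z = y"
  proof -
    obtain q where "q > 0" "(f ^^ q) z = z" using per \<open>z \<in> V\<close> by blast
    then have "(f ^^ (q * n)) z = z"
      using funpow_mod_eq[where f=f and x=z and n=q and m="q * n"] by simp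
    moreover have "q * n = (q * n - n) + n" using \<open>q > 0\<close> by simp
    ultimately have "(f ^^ (q * n - n)) y = z"
      using that(2) by (metis comp_apply funpow_add)
    then show ?thesis by blast
  qed
  ultimately obtain m where "(f ^^ m) y = z" by blast
  then have "(f ^^ (m mod p)) y = z" using funpow_mod_eq[OF y(2)] by simp
  then show "z \<in> (\<lambda>n. (f ^^ n) y) ` {..<p}" using y(1) by force
qed

lemma infinite_iterate_classes_periodic:
  assumes "infinite V" and per: "\<forall>x\<in>V. \<exists>p>0. (f ^^ p) x = x"
  shows "infinite (iterate_class V f ` V)"
proof
  assume "finite (iterate_class V f ` V)"
  moreover have "finite (iterate_class V f y)" if "y \<in> V" for y
    using per that iterate_class_subset_periodic_orbit[OF per]
    by (metis finite_imageI finite_lessThan finite_subset)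
  ultimately have "finite (\<Union>(iterate_class V f ` V))" by blast
  moreover have "V \<subseteq> \<Union>(iterate_class V f ` V)" using self_in_iterate_class by fast
  ultimately show False using \<open>infinite V\<close> finite_subset by blast
qed

lemma inj_funpow_aperiodic:
  assumes f: "automorphism V E f" and "x \<in> V" and aper: "\<forall>p>0. (f ^^ p) x \<noteq> x"
  shows "inj (\<lambda>n. (f ^^ n) x)"
proof -
  have neq: "(f ^^ a) x \<noteq> (f ^^ b) x" if "a < b" for a b
  proof
    assume eq: "(f ^^ a) x = (f ^^ b) x"
    have "(f ^^ b) x = (f ^^ (a + (b - a))) x" using \<open>a < b\<close> by simp
    also have "\<dots> = (f ^^ a) ((f ^^ (b - a)) x)" by (simp only: funpow_add o_apply)
    finally have shifted: "(f ^^ a) ((f ^^ (b - a)) x) = (f ^^ a) x" using eq by simp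
    have "inj_on (f ^^ a) V" "(f ^^ (b - a)) x \<in> V"
      using automorphism_funpow[OF f] \<open>x \<in> V\<close> unfolding automorphism_def bij_betw_def by auto
    then have "(f ^^ (b - a)) x = x" using inj_onD shifted \<open>x \<in> V\<close> by fast
    then show False using aper \<open>a < b\<close> by simp
  qed
  show ?thesis
  proof (rule injI)
    fix a b assume "(f ^^ a) x = (f ^^ b) x"
    then show "a = b" using neq[of a b] neq[of b a] by (cases a b rule: linorder_cases) auto
  qed
qed

lemma card_iterate_classes_aperiodic:
  assumes f: "automorphism V E f" and "x \<in> V" and aper: "\<forall>p>0. (f ^^ p) x \<noteq> x"
  shows "card (iterate_class V (f ^^ k) ` (\<lambda>i. (f ^^ i) x) ` {..<k}) = k"
proof -
  have inj: "inj (\<lambda>n. (f ^^ n) x)" using inj_funpow_aperiodic[OF assms] .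
  have iterate: "((f ^^ k) ^^ n) ((f ^^ i) x) = (f ^^ (k * n + i)) x" for n i
    by (simp only: funpow_mult funpow_add o_apply)
  have "i = j" if "i < k" "j < k"
    and "iterate_class V (f ^^ k) ((f ^^ i) x) = iterate_class V (f ^^ k) ((f ^^ j) x)" for i j
  proof -
    have "(f ^^ j) x \<in> V" using automorphism_funpow[OF f] \<open>x \<in> V\<close>
      unfolding automorphism_def bij_betw_def by auto
    then have "iterate_related (f ^^ k) ((f ^^ i) x) ((f ^^ j) x)"
      using self_in_iterate_class that(3) unfolding iterate_class_def by fast
    then obtain n where "(f ^^ (k * n + i)) x = (f ^^ j) x \<or> (f ^^ (k * n + j)) x = (f ^^ i) x"
      unfolding iterate_related_def iterate by blast
    then have "k * n + i = j \<or> k * n + j = i" using injD[OF inj] by blast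
    then show "i = j" using that(1,2) by (cases n) auto
  qed
  then have "inj_on (iterate_class V (f ^^ k) \<circ> (\<lambda>i. (f ^^ i) x)) {..<k}"
    by (intro inj_onI) auto
  then have "card ((iterate_class V (f ^^ k) \<circ> (\<lambda>i. (f ^^ i) x)) ` {..<k}) = k"
    by (simp only: card_image card_lessThan)
  then show ?thesis by (simp only: image_comp)
qed

lemma exists_non_distinguishing_colouring:
  assumes "infinite V" and f: "automorphism V E f" "non_identity_on V f" and "k \<ge> 1"
  shows "\<exists>c. uses_exactly V c k \<and> \<not> distinguishing V E c"
proof (cases "\<forall>x\<in>V. \<exists>p>0. (f ^^ p) x = x")
  case True
  then have "infinite (iterate_class V f ` V)"
    using infinite_iterate_classes_periodic \<open>infinite V\<close> by blast
  then obtain T where "T \<subseteq> iterate_class V f ` V" "card T = k"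
    using infinite_arbitrarily_large by blast
  then show ?thesis using non_distinguishing_colouring[OF f _ _ \<open>k \<ge> 1\<close>] by blast
next
  case False
  then obtain x where x: "x \<in> V" "\<forall>p>0. (f ^^ p) x \<noteq> x" by blast
  have "(f ^^ k) x \<noteq> x" using x(2) \<open>k \<ge> 1\<close> by simp
  then have non_id: "non_identity_on V (f ^^ k)" using x(1) unfolding non_identity_on_def by blast
  have "(\<lambda>i. (f ^^ i) x) ` {..<k} \<subseteq> V"
    using automorphism_funpow[OF f(1)] x(1) unfolding automorphism_def bij_betw_def by auto
  then have classes: "iterate_class V (f ^^ k) ` (\<lambda>i. (f ^^ i) x) ` {..<k}
      \<subseteq> iterate_class V (f ^^ k) ` V"
    by (rule image_mono)
  show ?thesis
    by (rule non_distinguishing_colouring[OF automorphism_funpow[OF f(1)] non_id classes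
          card_iterate_classes_aperiodic[OF f(1) x] \<open>k \<ge> 1\<close>])
qed

lemma dist_threshold_asymmetric:
  assumes "asymmetric V E"
  shows "dist_threshold V E = 1"
proof -
  have "{k. k \<ge> 1 \<and> (\<forall>c. uses_exactly V c k \<longrightarrow> distinguishing V E c)} = {1..}"
    using assms unfolding asymmetric_def distinguishing_def by auto
  then have "dist_threshold V E = Inf (enat ` {1..})" unfolding dist_threshold_def by simp
  also have "\<dots> = 1"
  proof (rule antisym)
    show "Inf (enat ` {1..}) \<le> 1" by (rule Inf_lower) (simp add: one_enat_def)
    show "1 \<le> Inf (enat ` {1..})" by (rule Inf_greatest) (auto simp: one_enat_def)
  qed
  finally show ?thesis .
qed

lemma dist_threshold_infinite:
  assumes "\<forall>k\<ge>1. \<exists>c. uses_exactly V c k \<and> \<not> distinguishing V E c"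
  shows "dist_threshold V E = \<infinity>"
proof -
  have none: "{k. k \<ge> 1 \<and> (\<forall>c. uses_exactly V c k \<longrightarrow> distinguishing V E c)} = {}"
    using assms by blast
  show ?thesis unfolding dist_threshold_def none by (simp add: top_enat_def)
qed

theorem mainTheorem8:
  fixes V :: "'a set" and E :: "'a \<Rightarrow> 'a \<Rightarrow> bool"
  assumes "simple_graph V E" and "infinite V"
  shows "(dist_threshold V E = 1 \<longleftrightarrow> asymmetric V E) \<and>
         (dist_threshold V E = 1 \<or> dist_threshold V E = \<infinity>)"
proof (cases "asymmetric V E")
  case True
  then show ?thesis using dist_threshold_asymmetric[OF True] by simp
next
  case False
  then obtain f where "automorphism V E f" "non_identity_on V f"
    unfolding asymmetric_def by blast
  then have "dist_threshold V E = \<infinity>"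
    using exists_non_distinguishing_colouring[OF \<open>infinite V\<close>] dist_threshold_infinite by blast
  then show ?thesis using False by simp
qed

end
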